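(* Let $n\ge k\ge 3$ and let $U_1$ be the unicyclic graph on $k$ vertices consisting of a triangle $v_1v_2v_3$ together with $k-3$ further vertices each adjacent only to $v_1$. Regard $U_1$ as a subgraph of $K_n$ and let $\Gamma=(K_n,U_1^-)$. Then, with $u=n-k$, $$\varphi(\Gamma,\lambda)=(\lambda+1)^{n-5}(\lambda-1)\Big(\lambda^4+(6-n)\lambda^3+(16-5n)\lambda^2+(4k-11n+4ku+18)\lambda+28k-31n+12ku+7\Big).$$
   Context: For a subgraph $H$ of $K_n$, $(K_n,H^-)$ denotes the signed complete graph on $n$ vertices whose negative edges are exactly the edges of $H$ (all other edges positive); its adjacency matrix has entry $-1$ for negative edges, $+1$ for positive edges and $0$ on the diagonal. $\varphi(\Gamma,\lambda)=\det(\lambda I-A(\Gamma))$. *)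

theory Defs
  imports "Jordan_Normal_Form.Char_Poly"
begin

text \<open>Vertices of K_n are 0,...,n-1. A subgraph H of K_n is given by a (symmetric)
edge predicate H on vertices. The signed complete graph (K_n, H^-) has adjacency
matrix with 0 on the diagonal, -1 on edges of H, +1 on all other pairs.\<close>

definition signed_complete_adj :: "nat \<Rightarrow> (nat \<Rightarrow> nat \<Rightarrow> bool) \<Rightarrow> int mat" where
  "signed_complete_adj n H =
     mat n n (\<lambda>(i,j). if i = j then 0 else if H i j then -1 else 1)"

text \<open>The unicyclic graph U_1 on vertices 0,...,k-1: triangle v1 v2 v3 = 0 1 2,
and every further vertex 3,...,k-1 adjacent only to v1 = 0.\<close>

definition U1_edge :: "nat \<Rightarrow> nat \<Rightarrow> nat \<Rightarrow> bool" where
  "U1_edge k i j =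
     (i \<noteq> j \<and> i < k \<and> j < k \<and> ((i < 3 \<and> j < 3) \<or> i = 0 \<or> j = 0))"

end

theory Submission
  imports Defs
begin

(* Off the diagonal the adjacency matrix is J - 2 adj(U1), so the characteristic matrix
   lambda I - A equals (lambda + 1) I + U V, where U (n x 5) has columns the all-ones vector
   and the indicator vectors of v1, of the neighbourhood {v2, ..., vk} of v1, of v2 and of v3.
   Sylvester's determinant identity trades det ((lambda + 1) I_n + U V) for
   det ((lambda + 1) I_5 + V U) at the cost of the factor (lambda + 1)^(n - 5), and the entries
   of V U are sizes of intersections of these vertex sets, hence explicit in n and k. *)

lemma det_mat_Suc:
  "det (mat (Suc m) (Suc m) f :: 'a :: comm_ring_1 mat) =
   (\<Sum>j<Suc m. f (0, j) * (-1) ^ j *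
      det (mat m m (\<lambda>(a, b). f (Suc a, if b < j then b else Suc b))))"
proof -
  have minor: "mat_delete (mat (Suc m) (Suc m) f) 0 j =
      mat m m (\<lambda>(a, b). f (Suc a, if b < j then b else Suc b))" for j
    unfolding mat_delete_def by (rule eq_matI) auto
  have "det (mat (Suc m) (Suc m) f) =
      (\<Sum>j<Suc m. mat (Suc m) (Suc m) f $$ (0, j) * cofactor (mat (Suc m) (Suc m) f) 0 j)"
    by (rule laplace_expansion_row) auto
  then show ?thesis
    by (simp add: cofactor_def minor mult.assoc)
qed

lemma det_mat_0: "det (mat 0 0 f :: 'a :: comm_ring_1 mat) = 1"
  by (simp add: det_def')

lemma det_mat_3:
  "det (mat 3 3 f :: 'a :: comm_ring_1 mat) =
     f (0,0) * f (1,1) * f (2,2) - f (0,0) * f (1,2) * f (2,1) - f (0,1) * f (1,0) * f (2,2)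
   + f (0,1) * f (1,2) * f (2,0) + f (0,2) * f (1,0) * f (2,1) - f (0,2) * f (1,1) * f (2,0)"
  by (simp add: numeral_eq_Suc det_mat_Suc det_mat_0 algebra_simps)

lemma sylvester_determinant_identity:
  fixes U :: "'a :: idom mat"
  assumes U: "U \<in> carrier_mat n m" and V: "V \<in> carrier_mat m n"
  shows "c ^ m * det (c \<cdot>\<^sub>m 1\<^sub>m n + U * V) = c ^ n * det (c \<cdot>\<^sub>m 1\<^sub>m m + V * U)"
proof -
  define X where "X = four_block_mat (c \<cdot>\<^sub>m 1\<^sub>m n) (- U) V (1\<^sub>m m)"
  define L where "L = four_block_mat (1\<^sub>m n) U (0\<^sub>m m n) (c \<cdot>\<^sub>m 1\<^sub>m m)"
  have X: "X \<in> carrier_mat (n + m) (n + m)" and L: "L \<in> carrier_mat (n + m) (n + m)"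
    unfolding X_def L_def using U V by auto
  have det_L: "det L = c ^ m"
    unfolding L_def using U by (subst det_four_block_mat_lower_left_zero[of _ n _ m]) auto
  have "L * X = four_block_mat (c \<cdot>\<^sub>m 1\<^sub>m n + U * V) (0\<^sub>m n m) (c \<cdot>\<^sub>m V) (c \<cdot>\<^sub>m 1\<^sub>m m)"
    unfolding L_def X_def using U V by (subst mult_four_block_mat[of _ n n _ m _ m]) auto
  then have LX: "det L * det X = c ^ m * det (c \<cdot>\<^sub>m 1\<^sub>m n + U * V)"
    using U V
    by (simp add: det_mult[OF L X, symmetric] det_four_block_mat_upper_right_zero[of _ n _ m])
  have "c \<cdot>\<^sub>m 1\<^sub>m n * U + - U * (c \<cdot>\<^sub>m 1\<^sub>m m) = 0\<^sub>m n m"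
    using U by (intro eq_matI) auto
  moreover have "V * U + c \<cdot>\<^sub>m 1\<^sub>m m = c \<cdot>\<^sub>m 1\<^sub>m m + V * U"
    using U V by (intro comm_add_mat[of _ m m]) auto
  ultimately have "X * L = four_block_mat (c \<cdot>\<^sub>m 1\<^sub>m n) (0\<^sub>m n m) V (c \<cdot>\<^sub>m 1\<^sub>m m + V * U)"
    unfolding L_def X_def using U V by (subst mult_four_block_mat[of _ n n _ m _ m]) auto
  then have XL: "det X * det L = c ^ n * det (c \<cdot>\<^sub>m 1\<^sub>m m + V * U)"
    using U V
    by (simp add: det_mult[OF X L, symmetric] det_four_block_mat_upper_right_zero[of _ n _ m])
  show ?thesis
    using LX XL by (simp add: mult.commute)
qed

lemma poly_char_poly:
  assumes "A \<in> carrier_mat n n"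
  shows "poly (char_poly A) x = det (x \<cdot>\<^sub>m 1\<^sub>m n - A)"
  unfolding char_poly_def
  by (rule poly_det_cong[of _ n]) (use assms in \<open>auto simp: char_poly_matrix_def\<close>)

lemma mat_of_rows_mult_mat_of_cols:
  assumes "set rs \<subseteq> carrier_vec n" and "set cs \<subseteq> carrier_vec n"
  shows "mat_of_rows n rs * mat_of_cols n cs =
    mat_of_rows_list (length cs) (map (\<lambda>r. map (\<lambda>c. r \<bullet> c) cs) rs)"
  using assms by (intro eq_matI) (auto simp: subset_iff mat_of_rows_list_def)

definition indicator_vec :: "nat \<Rightarrow> nat set \<Rightarrow> 'a :: zero_neq_one vec" where
  "indicator_vec n A = vec n (\<lambda>i. of_bool (i \<in> A))"

lemma dim_indicator_vec [simp]: "dim_vec (indicator_vec n A) = n"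
  by (simp add: indicator_vec_def)

lemma indicator_vec_carrier [simp]: "indicator_vec n A \<in> carrier_vec n"
  by (simp add: indicator_vec_def)

lemma index_indicator_vec [simp]: "i < n \<Longrightarrow> indicator_vec n A $ i = of_bool (i \<in> A)"
  by (simp add: indicator_vec_def)

lemma scalar_prod_indicator_vec:
  "indicator_vec n A \<bullet> indicator_vec n B = (of_nat (card (A \<inter> B \<inter> {..<n})) :: 'a :: semiring_1)"
proof -
  have "indicator_vec n A \<bullet> indicator_vec n B = (\<Sum>i<n. of_bool (i \<in> A \<inter> B) :: 'a)"
    by (simp add: scalar_prod_def atLeast0LessThan flip: of_bool_conj)
  also have "\<dots> = of_nat (card ({..<n} \<inter> {i. i \<in> A \<inter> B}))"
    by simp
  also have "{..<n} \<inter> {i. i \<in> A \<inter> B} = A \<inter> B \<inter> {..<n}"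
    by blast
  finally show ?thesis .
qed

(* With v1, v2, v3 = 0, 1, 2 the product U1_left n k * U1_right n k is -J + 2 adj(U1). *)
definition U1_left :: "nat \<Rightarrow> nat \<Rightarrow> int mat" where
  "U1_left n k = mat_of_cols n
     [indicator_vec n {..<n}, indicator_vec n {0}, indicator_vec n {1..<k},
      indicator_vec n {1}, indicator_vec n {2}]"

definition U1_right :: "nat \<Rightarrow> nat \<Rightarrow> int mat" where
  "U1_right n k = mat_of_rows n
     [- indicator_vec n {..<n}, 2 \<cdot>\<^sub>v indicator_vec n {1..<k}, 2 \<cdot>\<^sub>v indicator_vec n {0},
      2 \<cdot>\<^sub>v indicator_vec n {2}, 2 \<cdot>\<^sub>v indicator_vec n {1}]"

definition U1_gram :: "nat \<Rightarrow> nat \<Rightarrow> int mat" where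
  "U1_gram n k = mat_of_rows_list 5
     [[- int n, -1, 1 - int k, -1, -1],
      [2 * int k - 2, 0, 2 * int k - 2, 2, 2],
      [2, 2, 0, 0, 0],
      [2, 0, 2, 0, 2],
      [2, 0, 2, 2, 0]]"

lemma U1_left_carrier: "U1_left n k \<in> carrier_mat n 5"
  by (auto simp: U1_left_def intro!: carrier_matI)

lemma U1_right_carrier: "U1_right n k \<in> carrier_mat 5 n"
  by (auto simp: U1_right_def intro!: carrier_matI)

lemma signed_U1_char_matrix_low_rank:
  assumes "3 \<le> k"
  shows "x \<cdot>\<^sub>m 1\<^sub>m n - signed_complete_adj n (U1_edge k) =
    (x + 1) \<cdot>\<^sub>m 1\<^sub>m n + U1_left n k * U1_right n k"
  using assms
  by (intro eq_matI) (auto simp: signed_complete_adj_def U1_edge_def U1_left_def U1_right_def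
      mat_of_cols_def mat_of_rows_def scalar_prod_def numeral_eq_Suc atLeast0LessThan lessThan_Suc)

lemma U1_right_mult_U1_left:
  assumes "3 \<le> k" and "k \<le> n"
  shows "U1_right n k * U1_left n k = U1_gram n k"
proof -
  have "{1..<k} \<inter> {..<n} = {1..<k}" "{..<n} \<inter> {1..<k} = {1..<k}"
    using assms by auto
  then show ?thesis
    unfolding U1_right_def U1_left_def U1_gram_def using assms
    by (subst mat_of_rows_mult_mat_of_cols) (auto simp: scalar_prod_indicator_vec numeral_eq_Suc)
qed

lemma det_U1_gram:
  "det ((x + 1) \<cdot>\<^sub>m 1\<^sub>m 5 + U1_gram n k) =
     (x - 1) * (x ^ 4 + (6 - int n) * x ^ 3 + (16 - 5 * int n) * x ^ 2
       + (4 * int k - 11 * int n + 4 * int k * (int n - int k) + 18) * x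
       + 28 * int k - 31 * int n + 12 * int k * (int n - int k) + 7)"
proof -
  have entries: "(x + 1) \<cdot>\<^sub>m 1\<^sub>m 5 + U1_gram n k =
      mat 5 5 (\<lambda>(i, j). of_bool (i = j) * (x + 1) + U1_gram n k $$ (i, j))"
    by (auto intro!: eq_matI simp: U1_gram_def mat_of_rows_list_def)
  have det_5: "det (mat 5 5 f) = (\<Sum>j<5. f (0, j) * (-1) ^ j *
      det (mat 4 4 (\<lambda>(a, b). f (Suc a, if b < j then b else Suc b))))"
    and det_4: "det (mat 4 4 g) = (\<Sum>j<4. g (0, j) * (-1) ^ j *
      det (mat 3 3 (\<lambda>(a, b). g (Suc a, if b < j then b else Suc b))))"
    for f g :: "nat \<times> nat \<Rightarrow> int"
    using det_mat_Suc[of 4 f] det_mat_Suc[of 3 g] by (simp_all add: numeral_eq_Suc)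
  show ?thesis
    unfolding entries det_5 det_4 det_mat_3
    by (simp add: lessThan_nat_numeral U1_gram_def mat_of_rows_list_def)
      (simp add: algebra_simps power2_eq_square power3_eq_cube eval_nat_numeral)
qed

theorem lemma3p5:
  fixes n k :: nat
  assumes "3 \<le> k" and "k \<le> n"
  defines "u \<equiv> int n - int k"
  shows "[:1,1:] ^ 5 * char_poly (signed_complete_adj n (U1_edge k))
       = [:1,1:] ^ n * [:-1,1:] *
         [: 28 * int k - 31 * int n + 12 * int k * u + 7,
            4 * int k - 11 * int n + 4 * int k * u + 18,
            16 - 5 * int n, 6 - int n, 1 :]" (is "?lhs = ?rhs")
proof -
  have "poly ?lhs x = poly ?rhs x" for x
  proof -
    have "signed_complete_adj n (U1_edge k) \<in> carrier_mat n n"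
      by (simp add: signed_complete_adj_def)
    then have "poly ?lhs x = (x + 1) ^ 5 * det ((x + 1) \<cdot>\<^sub>m 1\<^sub>m n + U1_left n k * U1_right n k)"
      using assms(1) by (simp add: poly_char_poly signed_U1_char_matrix_low_rank add.commute)
    also have "\<dots> = (x + 1) ^ n * det ((x + 1) \<cdot>\<^sub>m 1\<^sub>m 5 + U1_right n k * U1_left n k)"
      by (rule sylvester_determinant_identity[OF U1_left_carrier U1_right_carrier])
    also have "\<dots> = poly ?rhs x"
      unfolding U1_right_mult_U1_left[OF assms(1,2)] det_U1_gram
      by (simp add: u_def algebra_simps power2_eq_square power3_eq_cube eval_nat_numeral)
    finally show ?thesis .
  qed
  then show ?thesis
    by (rule poly_ext)
qed

end
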